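(* $(\textbf{W}, \nabla_{\sqcup\!\sqcup}, \iota_{\sqcup\!\sqcup}, \Delta_\odot, \epsilon_\odot)$ is a graded bialgebra, but not a Hopf algebra.
   Context: Let $\Bbbk$ be a field. A word is a finite sequence of positive integers; $\ell(w)$ is its length and $\max(w)$ its largest letter ($\max(\emptyset)=0$). Let $\textsf{Shuffle}$ be the $\Bbbk$-vector space with basis all words, with the shuffle product $u\sqcup\!\sqcup v$ (sum over all interleavings of $u$ and $v$, with multiplicity) and deconcatenation coproduct. For a word $w=w_1\cdots w_m$ with $\max(w)\le n\in\mathbb{N}$, let $[w,n]$ be the linear endomorphism of $\textsf{Shuffle}$ sending a word $v$ of length $n$ to $v_{w_1}v_{w_2}\cdots v_{w_m}$ and all other words to $0$. Let $\textbf{W}$ be the span of all such $[w,n]$ (these form a basis), graded by declaring $[w,n]$ to have degree $\ell(w)$. For a word $w$ let $w\uparrow m$ be the word obtained by adding $m$ to each letter. Define $\nabla_{\sqcup\!\sqcup}([v,m]\otimes[w,n]) = [v\sqcup\!\sqcup (w\uparrow m), m+n]$ (extended linearly in the first slot), $\iota_{\sqcup\!\sqcup}(1)=[\emptyset,0]$, $\epsilon_\odot([w,n])=1$ if $w=\emptyset$ and $0$ otherwise, and $\Delta_\odot([w,n])=\sum_{i=0}^m [w_1\cdots w_i,n]\otimes[w_{i+1}\cdots w_m,n]$ for $w=w_1\cdots w_m$. *)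

theory Defs
  imports Main "HOL-Library.Poly_Mapping" "HOL-Library.Multiset"
begin

(* A vector space with basis indexed by the type 'b over the field 'k is modelled as
  the finitely supported functions 'b \<Rightarrow>_0 'k.  The tensor product of two such spaces
  is the free space on the product basis, ('b \<times> 'c) \<Rightarrow>_0 'k.  A linear map out of a free
  space is the same thing as an arbitrary assignment of values to basis vectors. *)

definition vsmult :: "'k::field \<Rightarrow> ('b \<Rightarrow>\<^sub>0 'k) \<Rightarrow> ('b \<Rightarrow>\<^sub>0 'k)" where
  "vsmult c x = Poly_Mapping.map (\<lambda>a. c * a) x"

definition basis_vec :: "'b \<Rightarrow> ('b \<Rightarrow>\<^sub>0 'k::field)" where
  "basis_vec b = Poly_Mapping.single b 1"

definition lin_ext :: "('b \<Rightarrow> ('c \<Rightarrow>\<^sub>0 'k::field)) \<Rightarrow> ('b \<Rightarrow>\<^sub>0 'k) \<Rightarrow> ('c \<Rightarrow>\<^sub>0 'k)" where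
  "lin_ext F x = (\<Sum>b\<in>Poly_Mapping.keys x. vsmult (Poly_Mapping.lookup x b) (F b))"

definition lin_fun :: "('b \<Rightarrow> 'k::field) \<Rightarrow> ('b \<Rightarrow>\<^sub>0 'k) \<Rightarrow> 'k" where
  "lin_fun f x = (\<Sum>b\<in>Poly_Mapping.keys x. Poly_Mapping.lookup x b * f b)"

definition tens :: "('b \<Rightarrow>\<^sub>0 'k::field) \<Rightarrow> ('c \<Rightarrow>\<^sub>0 'k) \<Rightarrow> (('b \<times> 'c) \<Rightarrow>\<^sub>0 'k)" where
  "tens x y = (\<Sum>a\<in>Poly_Mapping.keys x. \<Sum>b\<in>Poly_Mapping.keys y. Poly_Mapping.single (a, b) (Poly_Mapping.lookup x a * Poly_Mapping.lookup y b))"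

definition tens_map :: "('b \<Rightarrow> ('d \<Rightarrow>\<^sub>0 'k::field)) \<Rightarrow> ('c \<Rightarrow> ('e \<Rightarrow>\<^sub>0 'k))
     \<Rightarrow> (('b \<times> 'c) \<Rightarrow>\<^sub>0 'k) \<Rightarrow> (('d \<times> 'e) \<Rightarrow>\<^sub>0 'k)" where
  "tens_map F G = lin_ext (\<lambda>(a, b). tens (F a) (G b))"

(* Data: a product on basis vectors mb (extended bilinearly; this is the linear map
  W\<otimes>W \<rightarrow> W), a unit element u (the image of 1 under the unit map k \<rightarrow> W), a coproduct
  cb on basis vectors (extended linearly to W \<rightarrow> W\<otimes>W), and a counit eb on basis vectors
  (extended linearly to W \<rightarrow> k). *)

definition mult_lin :: "('b \<Rightarrow> 'b \<Rightarrow> ('b \<Rightarrow>\<^sub>0 'k::field)) \<Rightarrow> (('b \<times> 'b) \<Rightarrow>\<^sub>0 'k) \<Rightarrow> ('b \<Rightarrow>\<^sub>0 'k)" where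
  "mult_lin mb = lin_ext (\<lambda>(a, b). mb a b)"

definition mult :: "('b \<Rightarrow> 'b \<Rightarrow> ('b \<Rightarrow>\<^sub>0 'k::field)) \<Rightarrow> ('b \<Rightarrow>\<^sub>0 'k) \<Rightarrow> ('b \<Rightarrow>\<^sub>0 'k) \<Rightarrow> ('b \<Rightarrow>\<^sub>0 'k)" where
  "mult mb x y = mult_lin mb (tens x y)"

definition tens_prod_basis :: "('b \<Rightarrow> 'b \<Rightarrow> ('b \<Rightarrow>\<^sub>0 'k::field))
     \<Rightarrow> ('b \<times> 'b) \<Rightarrow> ('b \<times> 'b) \<Rightarrow> (('b \<times> 'b) \<Rightarrow>\<^sub>0 'k)" where
  "tens_prod_basis mb p q = tens (mb (fst p) (fst q)) (mb (snd p) (snd q))"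

definition bialgebra :: "('b \<Rightarrow> 'b \<Rightarrow> ('b \<Rightarrow>\<^sub>0 'k::field)) \<Rightarrow> ('b \<Rightarrow>\<^sub>0 'k)
     \<Rightarrow> ('b \<Rightarrow> (('b \<times> 'b) \<Rightarrow>\<^sub>0 'k)) \<Rightarrow> ('b \<Rightarrow> 'k) \<Rightarrow> bool" where
  "bialgebra mb u cb eb \<longleftrightarrow>
     \<comment> \<open>associativity\<close>
     (\<forall>x y z. mult mb (mult mb x y) z = mult mb x (mult mb y z)) \<and>
     \<comment> \<open>unit\<close>
     (\<forall>x. mult mb u x = x \<and> mult mb x u = x) \<and>
     \<comment> \<open>coassociativity: (\<Delta>\<otimes>id)\<Delta> = (id\<otimes>\<Delta>)\<Delta>, up to the canonical reassociation\<close>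
     (\<forall>x a b c. Poly_Mapping.lookup (tens_map cb basis_vec (lin_ext cb x)) ((a, b), c)
               = Poly_Mapping.lookup (tens_map basis_vec cb (lin_ext cb x)) (a, (b, c))) \<and>
     \<comment> \<open>counit: (\<epsilon>\<otimes>id)\<Delta> = id = (id\<otimes>\<epsilon>)\<Delta>\<close>
     (\<forall>x. lin_ext (\<lambda>(a, b). vsmult (eb a) (basis_vec b)) (lin_ext cb x) = x \<and>
          lin_ext (\<lambda>(a, b). vsmult (eb b) (basis_vec a)) (lin_ext cb x) = x) \<and>
     \<comment> \<open>the coproduct is an algebra morphism\<close>
     (\<forall>x y. lin_ext cb (mult mb x y) = mult (tens_prod_basis mb) (lin_ext cb x) (lin_ext cb y)) \<and>
     lin_ext cb u = tens u u \<and>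
     \<comment> \<open>the counit is an algebra morphism\<close>
     (\<forall>x y. lin_fun eb (mult mb x y) = lin_fun eb x * lin_fun eb y) \<and>
     lin_fun eb u = 1"

(* Grading W = \<Oplus>_d W_d where W_d is spanned by the basis vectors of degree d. *)
definition graded_bialgebra :: "('b \<Rightarrow> nat) \<Rightarrow> ('b \<Rightarrow> 'b \<Rightarrow> ('b \<Rightarrow>\<^sub>0 'k::field)) \<Rightarrow> ('b \<Rightarrow>\<^sub>0 'k)
     \<Rightarrow> ('b \<Rightarrow> (('b \<times> 'b) \<Rightarrow>\<^sub>0 'k)) \<Rightarrow> ('b \<Rightarrow> 'k) \<Rightarrow> bool" where
  "graded_bialgebra deg mb u cb eb \<longleftrightarrow>
     bialgebra mb u cb eb \<and>
     (\<forall>a b. \<forall>c\<in>Poly_Mapping.keys (mb a b). deg c = deg a + deg b) \<and>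
     (\<forall>c\<in>Poly_Mapping.keys u. deg c = 0) \<and>
     (\<forall>a. \<forall>(p, q)\<in>Poly_Mapping.keys (cb a). deg p + deg q = deg a) \<and>
     (\<forall>a. eb a \<noteq> 0 \<longrightarrow> deg a = 0)"

(* Hopf algebra: a bialgebra admitting an antipode, i.e. a linear map S : W \<rightarrow> W
  (given by its values on basis vectors) with \<nabla>(S\<otimes>id)\<Delta> = \<iota>\<epsilon> = \<nabla>(id\<otimes>S)\<Delta>. *)
definition hopf_algebra :: "('b \<Rightarrow> 'b \<Rightarrow> ('b \<Rightarrow>\<^sub>0 'k::field)) \<Rightarrow> ('b \<Rightarrow>\<^sub>0 'k)
     \<Rightarrow> ('b \<Rightarrow> (('b \<times> 'b) \<Rightarrow>\<^sub>0 'k)) \<Rightarrow> ('b \<Rightarrow> 'k) \<Rightarrow> bool" where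
  "hopf_algebra mb u cb eb \<longleftrightarrow>
     bialgebra mb u cb eb \<and>
     (\<exists>S :: 'b \<Rightarrow> ('b \<Rightarrow>\<^sub>0 'k). \<forall>x.
        mult_lin mb (tens_map S basis_vec (lin_ext cb x)) = vsmult (lin_fun eb x) u \<and>
        mult_lin mb (tens_map basis_vec S (lin_ext cb x)) = vsmult (lin_fun eb x) u)"

(* Words are lists of positive integers.  The basis of W: pairs [w,n] with max(w) \<le> n. *)
typedef wbasis = "{(w :: nat list, n :: nat). \<forall>x\<in>set w. 0 < x \<and> x \<le> n}"
  morphisms rep_wb Abs_wb
  by (rule exI[of _ "([], 0)"]) simp

(* Shuffle product of words, as the multiset of all interleavings (with multiplicity). *)
fun shuffle_ms :: "'a list \<Rightarrow> 'a list \<Rightarrow> 'a list multiset" where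
  "shuffle_ms [] ys = {#ys#}"
| "shuffle_ms xs [] = {#xs#}"
| "shuffle_ms (x # xs) (y # ys) =
     image_mset ((#) x) (shuffle_ms xs (y # ys)) + image_mset ((#) y) (shuffle_ms (x # xs) ys)"

definition word_up :: "nat list \<Rightarrow> nat \<Rightarrow> nat list" where
  "word_up w m = List.map (\<lambda>a. a + m) w"

definition W_deg :: "wbasis \<Rightarrow> nat" where
  "W_deg b = length (fst (rep_wb b))"

definition W_mult_basis :: "wbasis \<Rightarrow> wbasis \<Rightarrow> (wbasis \<Rightarrow>\<^sub>0 'k::field)" where
  "W_mult_basis b1 b2 = (case rep_wb b1 of (v, m) \<Rightarrow> case rep_wb b2 of (w, n) \<Rightarrow>
     sum_mset (image_mset (\<lambda>s. Poly_Mapping.single (Abs_wb (s, m + n)) 1)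
                 (shuffle_ms v (word_up w m))))"

definition W_unit :: "wbasis \<Rightarrow>\<^sub>0 'k::field" where
  "W_unit = Poly_Mapping.single (Abs_wb ([], 0)) 1"

definition W_coprod_basis :: "wbasis \<Rightarrow> ((wbasis \<times> wbasis) \<Rightarrow>\<^sub>0 'k::field)" where
  "W_coprod_basis b = (case rep_wb b of (w, n) \<Rightarrow>
     (\<Sum>i\<in>{0..length w}. Poly_Mapping.single (Abs_wb (take i w, n), Abs_wb (drop i w, n)) 1))"

definition W_counit_basis :: "wbasis \<Rightarrow> 'k::field" where
  "W_counit_basis b = (if fst (rep_wb b) = [] then 1 else 0)"

end

theory Submission
  imports Defs
begin

(* The structure maps of W are extended (bi)linearly from the basis [w,n], so each bialgebra axiom
  needs checking only on basis vectors, where it becomes an identity between multisets of words: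
  associativity of the shuffle product, coassociativity of deconcatenation, and the rule that
  deconcatenating a shuffle amounts to shuffling the halves of deconcatenations.  Shifting letters
  by m commutes with both operations, and all maps preserve word length.

  W is not a Hopf algebra: [\<emptyset>,1] is grouplike, so an antipode S would give
  S([\<emptyset>,1]) [\<emptyset>,1] = [\<emptyset>,0], whereas multiplication adds the second indices, so every basis
  vector occurring in that product has second index at least 1. *)

section \<open>Linear maps between free vector spaces\<close>

lemma lookup_vsmult [simp]: "Poly_Mapping.lookup (vsmult c x) b = c * Poly_Mapping.lookup x b"
  unfolding vsmult_def by transfer (simp add: when_def)

lemma vsmult_zero [simp]: "vsmult 0 x = 0" "vsmult c 0 = 0"
  by (rule poly_mapping_eqI, simp)+

lemma vsmult_one [simp]: "vsmult 1 x = x"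
  by (rule poly_mapping_eqI) simp

lemma lookup_basis_vec: "Poly_Mapping.lookup (basis_vec b) b' = (if b = b' then 1 else 0)"
  unfolding basis_vec_def by (simp add: lookup_single when_def)

lemma lookup_lin_ext:
  "Poly_Mapping.lookup (lin_ext F x) c
     = (\<Sum>b\<in>Poly_Mapping.keys x. Poly_Mapping.lookup x b * Poly_Mapping.lookup (F b) c)"
  unfolding lin_ext_def by (simp add: lookup_sum)

lemma lookup_lin_ext_superset:
  assumes "finite S" "Poly_Mapping.keys x \<subseteq> S"
  shows "Poly_Mapping.lookup (lin_ext F x) c
     = (\<Sum>b\<in>S. Poly_Mapping.lookup x b * Poly_Mapping.lookup (F b) c)"
  unfolding lookup_lin_ext
  by (rule sum.mono_neutral_left) (use assms in \<open>auto simp: in_keys_iff\<close>)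

lemma lin_ext_add: "lin_ext F (x + y) = lin_ext F x + lin_ext F y"
proof (rule poly_mapping_eqI)
  fix c
  let ?S = "Poly_Mapping.keys x \<union> Poly_Mapping.keys y"
  have "Poly_Mapping.keys (x + y) \<subseteq> ?S" by (rule keys_add)
  then show "Poly_Mapping.lookup (lin_ext F (x + y)) c = Poly_Mapping.lookup (lin_ext F x + lin_ext F y) c"
    by (simp add: lookup_add lookup_lin_ext_superset[of ?S] algebra_simps sum.distrib)
qed

lemma lin_ext_vsmult: "lin_ext F (vsmult c x) = vsmult c (lin_ext F x)"
proof (rule poly_mapping_eqI)
  fix d
  have "Poly_Mapping.keys (vsmult c x) \<subseteq> Poly_Mapping.keys x"
    by (auto simp: in_keys_iff)
  then have "Poly_Mapping.lookup (lin_ext F (vsmult c x)) d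
      = (\<Sum>b\<in>Poly_Mapping.keys x. Poly_Mapping.lookup (vsmult c x) b * Poly_Mapping.lookup (F b) d)"
    by (rule lookup_lin_ext_superset[OF finite_keys])
  then show "Poly_Mapping.lookup (lin_ext F (vsmult c x)) d = Poly_Mapping.lookup (vsmult c (lin_ext F x)) d"
    by (simp add: lookup_lin_ext sum_distrib_left algebra_simps)
qed

lemma lin_ext_basis_vec [simp]: "lin_ext F (basis_vec b) = F b"
  by (rule poly_mapping_eqI) (simp add: lookup_lin_ext basis_vec_def)

lemma basis_expansion: "x = (\<Sum>b\<in>Poly_Mapping.keys x. vsmult (Poly_Mapping.lookup x b) (basis_vec b))"
proof (rule poly_mapping_eqI)
  fix c
  have "(\<Sum>b\<in>Poly_Mapping.keys x. Poly_Mapping.lookup x b * (if b = c then 1 else 0))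
      = (\<Sum>b\<in>Poly_Mapping.keys x. if b = c then Poly_Mapping.lookup x c else 0)"
    by (rule sum.cong) auto
  also have "\<dots> = Poly_Mapping.lookup x c"
    by (simp add: in_keys_iff)
  finally show "Poly_Mapping.lookup x c
      = Poly_Mapping.lookup (\<Sum>b\<in>Poly_Mapping.keys x. vsmult (Poly_Mapping.lookup x b) (basis_vec b)) c"
    by (simp add: lookup_sum lookup_basis_vec)
qed

definition linear_map :: "(('b \<Rightarrow>\<^sub>0 'k::field) \<Rightarrow> ('c \<Rightarrow>\<^sub>0 'k)) \<Rightarrow> bool" where
  "linear_map f \<longleftrightarrow> (\<forall>x y. f (x + y) = f x + f y) \<and> (\<forall>c x. f (vsmult c x) = vsmult c (f x))"

definition linear_functional :: "(('b \<Rightarrow>\<^sub>0 'k::field) \<Rightarrow> 'k) \<Rightarrow> bool" where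
  "linear_functional f \<longleftrightarrow> (\<forall>x y. f (x + y) = f x + f y) \<and> (\<forall>c x. f (vsmult c x) = c * f x)"

lemma linear_map_lin_ext: "linear_map (lin_ext F)"
  by (simp add: linear_map_def lin_ext_add lin_ext_vsmult)

lemma linear_map_id: "linear_map (\<lambda>x. x)"
  by (simp add: linear_map_def)

lemma linear_map_comp: "linear_map f \<Longrightarrow> linear_map g \<Longrightarrow> linear_map (\<lambda>x. f (g x))"
  by (simp add: linear_map_def)

lemma linear_map_zero: "linear_map f \<Longrightarrow> f 0 = 0"
  unfolding linear_map_def by (metis add_cancel_right_right add_0_left)

lemma linear_map_sum: "linear_map f \<Longrightarrow> f (sum g A) = (\<Sum>a\<in>A. f (g a))"
  by (induction A rule: infinite_finite_induct) (auto simp: linear_map_zero linear_map_def)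

lemma linear_map_sum_mset:
  "linear_map f \<Longrightarrow> f (\<Sum>x\<in>#M. g x) = (\<Sum>x\<in>#M. f (g x))"
  by (induction M) (auto simp: linear_map_zero linear_map_def)

lemma linear_map_eq_lin_ext:
  assumes "linear_map f"
  shows "f x = lin_ext (\<lambda>b. f (basis_vec b)) x"
proof -
  have "f x = f (\<Sum>b\<in>Poly_Mapping.keys x. vsmult (Poly_Mapping.lookup x b) (basis_vec b))"
    by (subst basis_expansion[of x]) (rule refl)
  also have "\<dots> = lin_ext (\<lambda>b. f (basis_vec b)) x"
    using assms by (simp add: linear_map_sum lin_ext_def linear_map_def)
  finally show ?thesis .
qed

lemma linear_map_eqI:
  assumes "linear_map f" "linear_map g" "\<And>b. f (basis_vec b) = g (basis_vec b)"
  shows "f x = g x"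
proof -
  have "f x = lin_ext (\<lambda>b. f (basis_vec b)) x" by (rule linear_map_eq_lin_ext[OF assms(1)])
  also have "\<dots> = lin_ext (\<lambda>b. g (basis_vec b)) x" by (simp only: assms(3))
  also have "\<dots> = g x" by (rule linear_map_eq_lin_ext[OF assms(2), symmetric])
  finally show ?thesis .
qed

lemma bilinear_map_eqI:
  assumes "\<And>y. linear_map (\<lambda>x. f x y)" "\<And>x. linear_map (\<lambda>y. f x y)"
    and "\<And>y. linear_map (\<lambda>x. g x y)" "\<And>x. linear_map (\<lambda>y. g x y)"
    and "\<And>a b. f (basis_vec a) (basis_vec b) = g (basis_vec a) (basis_vec b)"
  shows "f x y = g x y"
proof -
  have "f (basis_vec a) y = g (basis_vec a) y" for a
    using assms(2,4,5) by (rule linear_map_eqI)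
  with assms(1,3) show ?thesis by (rule linear_map_eqI)
qed

lemma linear_functional_lookup: "linear_map f \<Longrightarrow> linear_functional (\<lambda>x. Poly_Mapping.lookup (f x) k)"
  by (simp add: linear_map_def linear_functional_def lookup_add)

lemma linear_functional_comp: "linear_functional \<phi> \<Longrightarrow> linear_map f \<Longrightarrow> linear_functional (\<lambda>x. \<phi> (f x))"
  by (simp add: linear_map_def linear_functional_def)

lemma linear_functional_mult_const:
  "linear_functional \<phi> \<Longrightarrow> linear_functional (\<lambda>x. \<phi> x * c)"
  "linear_functional \<phi> \<Longrightarrow> linear_functional (\<lambda>x. c * \<phi> x)"
  by (simp_all add: linear_functional_def algebra_simps)

lemma lin_fun_eq_lookup_lin_ext:
  "lin_fun f x = Poly_Mapping.lookup (lin_ext (\<lambda>b. Poly_Mapping.single () (f b)) x) ()"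
  by (simp add: lin_fun_def lookup_lin_ext)

lemma linear_functional_lin_fun: "linear_functional (lin_fun f)"
  unfolding lin_fun_eq_lookup_lin_ext by (rule linear_functional_lookup[OF linear_map_lin_ext])

lemma lin_fun_basis_vec [simp]: "lin_fun f (basis_vec b) = f b"
  by (simp add: lin_fun_eq_lookup_lin_ext)

lemma linear_functional_zero: "linear_functional f \<Longrightarrow> f 0 = 0"
  unfolding linear_functional_def by (metis add_cancel_right_right add_0_left)

lemma linear_map_single_unit:
  "linear_functional f \<Longrightarrow> linear_map (\<lambda>x. Poly_Mapping.single () (f x))"
  by (simp add: linear_functional_def linear_map_def single_add vsmult_def)

lemma linear_functional_eqI:
  assumes "linear_functional f" "linear_functional g" "\<And>b. f (basis_vec b) = g (basis_vec b)"
  shows "f x = g x"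
proof -
  have "Poly_Mapping.single () (f x) = Poly_Mapping.single () (g x)"
    using linear_map_single_unit[OF assms(1)] linear_map_single_unit[OF assms(2)]
    by (rule linear_map_eqI) (simp add: assms(3))
  then show ?thesis
    by (metis lookup_single_eq)
qed

lemma bilinear_functional_eqI:
  assumes "\<And>y. linear_functional (\<lambda>x. f x y)" "\<And>x. linear_functional (\<lambda>y. f x y)"
    and "\<And>y. linear_functional (\<lambda>x. g x y)" "\<And>x. linear_functional (\<lambda>y. g x y)"
    and "\<And>a b. f (basis_vec a) (basis_vec b) = g (basis_vec a) (basis_vec b)"
  shows "f x y = g x y"
proof -
  have "f (basis_vec a) y = g (basis_vec a) y" for a
    using assms(2,4,5) by (rule linear_functional_eqI)
  with assms(1,3) show ?thesis by (rule linear_functional_eqI)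
qed

lemma lookup_tens: "Poly_Mapping.lookup (tens x y) p = Poly_Mapping.lookup x (fst p) * Poly_Mapping.lookup y (snd p)"
proof -
  obtain a b where p: "p = (a, b)" by fastforce
  have "Poly_Mapping.lookup (tens x y) (a, b) =
     (\<Sum>a'\<in>Poly_Mapping.keys x. if a' = a then (\<Sum>b'\<in>Poly_Mapping.keys y.
        if b' = b then Poly_Mapping.lookup x a' * Poly_Mapping.lookup y b' else 0) else 0)"
    unfolding tens_def lookup_sum by (rule sum.cong) (auto simp: lookup_single when_def)
  also have "\<dots> = Poly_Mapping.lookup x a * Poly_Mapping.lookup y b"
    unfolding sum.delta[OF finite_keys]
    by (cases "a \<in> Poly_Mapping.keys x"; cases "b \<in> Poly_Mapping.keys y") (simp_all add: in_keys_iff)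
  finally show ?thesis by (simp add: p)
qed

lemma linear_map_tens: "linear_map (\<lambda>x. tens x y)" "linear_map (\<lambda>y. tens x y)"
  unfolding linear_map_def
  by (intro conjI allI poly_mapping_eqI, simp_all add: lookup_tens lookup_add algebra_simps)+

lemma tens_basis_vec: "tens (basis_vec a) (basis_vec b) = basis_vec (a, b)"
  by (rule poly_mapping_eqI) (simp add: lookup_tens lookup_basis_vec prod_eq_iff)

lemma linear_map_mult: "linear_map (\<lambda>x. mult mb x y)" "linear_map (\<lambda>y. mult mb x y)"
  unfolding mult_def mult_lin_def
  by (rule linear_map_comp[OF linear_map_lin_ext linear_map_tens(1)],
      rule linear_map_comp[OF linear_map_lin_ext linear_map_tens(2)])

lemma mult_basis_vec [simp]: "mult mb (basis_vec a) (basis_vec b) = mb a b"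
  by (simp add: mult_def mult_lin_def tens_basis_vec)

section \<open>Bialgebras given on a basis\<close>

lemma bialgebra_from_basis:
  fixes mb :: "'b \<Rightarrow> 'b \<Rightarrow> ('b \<Rightarrow>\<^sub>0 'k::field)"
  assumes assoc: "\<And>a b c. mult mb (mb a b) (basis_vec c) = mult mb (basis_vec a) (mb b c)"
    and unit: "\<And>b. mb e b = basis_vec b" "\<And>b. mb b e = basis_vec b"
    and coassoc: "\<And>d a b c. Poly_Mapping.lookup (tens_map cb basis_vec (cb d)) ((a, b), c)
                          = Poly_Mapping.lookup (tens_map basis_vec cb (cb d)) (a, (b, c))"
    and counit: "\<And>d. lin_ext (\<lambda>(a, b). vsmult (eb a) (basis_vec b)) (cb d) = basis_vec d"
                "\<And>d. lin_ext (\<lambda>(a, b). vsmult (eb b) (basis_vec a)) (cb d) = basis_vec d"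
    and coprod_mult: "\<And>a b. lin_ext cb (mb a b) = mult (tens_prod_basis mb) (cb a) (cb b)"
    and coprod_unit: "cb e = basis_vec (e, e)"
    and counit_mult: "\<And>a b. lin_fun eb (mb a b) = eb a * eb b"
    and counit_unit: "eb e = 1"
  shows "bialgebra mb (basis_vec e) cb eb"
  unfolding bialgebra_def
proof (intro conjI allI)
  fix x y z :: "'b \<Rightarrow>\<^sub>0 'k"
  have "mult mb (mult mb x y) (basis_vec c) = mult mb x (mult mb y (basis_vec c))" for c
    by (rule bilinear_map_eqI[OF linear_map_comp[OF linear_map_mult(1) linear_map_mult(1)]
          linear_map_comp[OF linear_map_mult(1) linear_map_mult(2)] linear_map_mult(1)
          linear_map_comp[OF linear_map_mult(2) linear_map_mult(1)]])
       (simp add: assoc)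
  then show "mult mb (mult mb x y) z = mult mb x (mult mb y z)"
    by (rule linear_map_eqI[OF linear_map_mult(2)
          linear_map_comp[OF linear_map_mult(2) linear_map_mult(2)]])
  show "mult mb (basis_vec e) x = x" "mult mb x (basis_vec e) = x"
    by (rule linear_map_eqI[OF linear_map_mult(2) linear_map_id], simp add: unit,
        rule linear_map_eqI[OF linear_map_mult(1) linear_map_id], simp add: unit)
  show "lin_ext (\<lambda>(a, b). vsmult (eb a) (basis_vec b)) (lin_ext cb x) = x"
       "lin_ext (\<lambda>(a, b). vsmult (eb b) (basis_vec a)) (lin_ext cb x) = x"
    by (rule linear_map_eqI[OF linear_map_comp[OF linear_map_lin_ext linear_map_lin_ext] linear_map_id],
        simp add: counit)+
  show "lin_ext cb (mult mb x y) = mult (tens_prod_basis mb) (lin_ext cb x) (lin_ext cb y)"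
    by (rule bilinear_map_eqI[OF linear_map_comp[OF linear_map_lin_ext linear_map_mult(1)]
          linear_map_comp[OF linear_map_lin_ext linear_map_mult(2)]
          linear_map_comp[OF linear_map_mult(1) linear_map_lin_ext]
          linear_map_comp[OF linear_map_mult(2) linear_map_lin_ext]])
       (simp add: coprod_mult)
  show "lin_fun eb (mult mb x y) = lin_fun eb x * lin_fun eb y"
    by (rule bilinear_functional_eqI[OF
          linear_functional_comp[OF linear_functional_lin_fun linear_map_mult(1)]
          linear_functional_comp[OF linear_functional_lin_fun linear_map_mult(2)]
          linear_functional_mult_const(1)[OF linear_functional_lin_fun]
          linear_functional_mult_const(2)[OF linear_functional_lin_fun]])
       (simp add: counit_mult)
  fix a b c
  show "Poly_Mapping.lookup (tens_map cb basis_vec (lin_ext cb x)) ((a, b), c)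
      = Poly_Mapping.lookup (tens_map basis_vec cb (lin_ext cb x)) (a, (b, c))"
    unfolding tens_map_def
    by (rule linear_functional_eqI[OF
          linear_functional_lookup[OF linear_map_comp[OF linear_map_lin_ext linear_map_lin_ext]]
          linear_functional_lookup[OF linear_map_comp[OF linear_map_lin_ext linear_map_lin_ext]]])
       (simp add: coassoc[unfolded tens_map_def])
next
  show "lin_ext cb (basis_vec e) = tens (basis_vec e) (basis_vec e)"
    by (simp add: coprod_unit tens_basis_vec)
  show "lin_fun eb (basis_vec e) = 1"
    by (simp add: counit_unit)
qed

lemma not_hopf_algebra_if_grouplike_of_higher_weight:
  fixes mb :: "'b \<Rightarrow> 'b \<Rightarrow> ('b \<Rightarrow>\<^sub>0 'k::field)" and wt :: "'b \<Rightarrow> nat"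
  assumes weight_mult: "\<And>a b c. c \<in> Poly_Mapping.keys (mb a b) \<Longrightarrow> wt c = wt a + wt b"
    and grouplike: "cb g = basis_vec (g, g)" "eb g = 1"
    and "wt e < wt g"
  shows "\<not> hopf_algebra mb (basis_vec e) cb eb"
proof
  assume "hopf_algebra mb (basis_vec e) cb eb"
  then obtain S :: "'b \<Rightarrow> ('b \<Rightarrow>\<^sub>0 'k)" where
    antipode: "mult_lin mb (tens_map S basis_vec (lin_ext cb (basis_vec g)))
                 = vsmult (lin_fun eb (basis_vec g)) (basis_vec e)"
    unfolding hopf_algebra_def by blast
  have "lin_ext (\<lambda>b. mb b g) (S g) = mult mb (S g) (basis_vec g)"
    by (subst linear_map_eq_lin_ext[OF linear_map_mult(1)]) simp
  also have "\<dots> = basis_vec e"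
    using antipode by (simp add: grouplike tens_map_def mult_def)
  finally have "lin_ext (\<lambda>b. mb b g) (S g) = basis_vec e" .
  moreover have "Poly_Mapping.lookup (mb b g) e = 0" for b
    using weight_mult[of e b g] \<open>wt e < wt g\<close> by (auto simp: in_keys_iff)
  then have "Poly_Mapping.lookup (lin_ext (\<lambda>b. mb b g) (S g)) e = 0"
    by (simp add: lookup_lin_ext)
  ultimately show False
    by (simp add: lookup_basis_vec)
qed

definition bind_mset :: "'a multiset \<Rightarrow> ('a \<Rightarrow> 'b multiset) \<Rightarrow> 'b multiset" where
  "bind_mset M f = (\<Sum>x\<in>#M. f x)"

lemma bind_mset_empty [simp]: "bind_mset {#} f = {#}"
  by (simp add: bind_mset_def)

lemma bind_mset_add_mset [simp]: "bind_mset (add_mset a M) f = f a + bind_mset M f"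
  by (simp add: bind_mset_def)

lemma bind_mset_union [simp]: "bind_mset (M + N) f = bind_mset M f + bind_mset N f"
  by (simp add: bind_mset_def)

lemma bind_mset_image [simp]: "bind_mset (image_mset g M) f = bind_mset M (\<lambda>x. f (g x))"
  by (simp add: bind_mset_def image_mset.compositionality comp_def)

lemma bind_mset_singleton_fun [simp]: "bind_mset M (\<lambda>x. {#x#}) = M"
  by (induction M) auto

lemma image_bind_mset: "image_mset h (bind_mset M f) = bind_mset M (\<lambda>x. image_mset h (f x))"
  by (induction M) auto

lemma bind_mset_add_fun: "bind_mset M (\<lambda>x. f x + g x) = bind_mset M f + bind_mset M g"
  by (induction M) auto

lemma bind_mset_add_mset_fun:
  "bind_mset M (\<lambda>x. add_mset (f x) (g x)) = image_mset f M + bind_mset M g"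
  by (induction M) auto

lemma count_image_mset_inj: "inj f \<Longrightarrow> count (image_mset f M) (f x) = count M x"
  by (induction M) (auto simp: inj_eq)

lemma sum_mset_if_filter_mset:
  "(\<Sum>x\<in>#M. if P x then f x else 0) = (\<Sum>x\<in>#filter_mset P M. f x)"
  by (induction M) auto

definition product_mset :: "'a multiset \<Rightarrow> 'b multiset \<Rightarrow> ('a \<times> 'b) multiset" where
  "product_mset M N = bind_mset M (\<lambda>a. image_mset (Pair a) N)"

lemma product_mset_singleton_left [simp]: "product_mset {#a#} N = image_mset (Pair a) N"
  by (simp add: product_mset_def)

lemma product_mset_union_left [simp]: "product_mset (M + M') N = product_mset M N + product_mset M' N"
  by (simp add: product_mset_def)

lemma product_mset_singleton_right [simp]: "product_mset M {#b#} = image_mset (\<lambda>a. (a, b)) M"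
  by (induction M) (auto simp: product_mset_def)

lemma product_mset_image_left:
  "product_mset (image_mset f M) N = image_mset (apfst f) (product_mset M N)"
  by (induction M) (auto simp: product_mset_def image_mset.compositionality comp_def)

lemma product_mset_image:
  "product_mset (image_mset f M) (image_mset g N) = image_mset (map_prod f g) (product_mset M N)"
  by (induction M) (auto simp: product_mset_def image_mset.compositionality comp_def)

lemma sum_mset_product_mset:
  "(\<Sum>P\<in>#product_mset M N. F P) = (\<Sum>a\<in>#M. \<Sum>b\<in>#N. F (a, b))"
  by (induction M) (auto simp: product_mset_def image_mset.compositionality comp_def)

section \<open>Shuffles and deconcatenations of words\<close>

lemma shuffle_ms_Nil_right [simp]: "shuffle_ms xs [] = {#xs#}"
  by (cases xs) auto

lemma shuffle_ms_map: "shuffle_ms (map f xs) (map f ys) = image_mset (map f) (shuffle_ms xs ys)"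
  by (induction xs ys rule: shuffle_ms.induct) (auto simp: image_mset.compositionality comp_def)

lemma length_shuffle_ms: "s \<in># shuffle_ms xs ys \<Longrightarrow> length s = length xs + length ys"
  by (induction xs ys arbitrary: s rule: shuffle_ms.induct) auto

lemma set_shuffle_ms: "s \<in># shuffle_ms xs ys \<Longrightarrow> set s = set xs \<union> set ys"
  by (induction xs ys arbitrary: s rule: shuffle_ms.induct) auto

declare shuffle_ms.simps(3) [simp del]

lemma bind_mset_shuffle_ms_Nil [simp]: "bind_mset M (shuffle_ms []) = M"
  by (induction M) auto

lemma bind_mset_image_Cons_shuffle_ms:
  "bind_mset (image_mset ((#) a) M) (\<lambda>s. shuffle_ms s (z # zs))
     = image_mset ((#) a) (bind_mset M (\<lambda>s. shuffle_ms s (z # zs)))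
       + image_mset ((#) z) (bind_mset (image_mset ((#) a) M) (\<lambda>s. shuffle_ms s zs))"
  by (induction M) (auto simp: shuffle_ms.simps(3))

lemma bind_mset_shuffle_ms_image_Cons:
  "bind_mset (image_mset ((#) a) N) (shuffle_ms (x # xs))
     = image_mset ((#) x) (bind_mset (image_mset ((#) a) N) (shuffle_ms xs))
       + image_mset ((#) a) (bind_mset N (shuffle_ms (x # xs)))"
  by (induction N) (auto simp: shuffle_ms.simps(3))

lemma bind_shuffle_ms_Cons_Cons_shuffle_ms:
  "bind_mset (shuffle_ms (x # xs) (y # ys)) (\<lambda>s. shuffle_ms s (z # zs))
     = image_mset ((#) x) (bind_mset (shuffle_ms xs (y # ys)) (\<lambda>s. shuffle_ms s (z # zs)))
       + image_mset ((#) y) (bind_mset (shuffle_ms (x # xs) ys) (\<lambda>s. shuffle_ms s (z # zs)))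
       + image_mset ((#) z) (bind_mset (shuffle_ms (x # xs) (y # ys)) (\<lambda>s. shuffle_ms s zs))"
  unfolding shuffle_ms.simps(3)[of x xs y ys] bind_mset_union bind_mset_image_Cons_shuffle_ms
  by (simp add: add_ac)

lemma bind_shuffle_ms_shuffle_ms_Cons_Cons:
  "bind_mset (shuffle_ms (y # ys) (z # zs)) (shuffle_ms (x # xs))
     = image_mset ((#) x) (bind_mset (shuffle_ms (y # ys) (z # zs)) (shuffle_ms xs))
       + image_mset ((#) y) (bind_mset (shuffle_ms ys (z # zs)) (shuffle_ms (x # xs)))
       + image_mset ((#) z) (bind_mset (shuffle_ms (y # ys) zs) (shuffle_ms (x # xs)))"
  unfolding shuffle_ms.simps(3)[of y ys z zs] bind_mset_union bind_mset_shuffle_ms_image_Cons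
  by (simp add: add_ac)

lemma shuffle_ms_assoc:
  "bind_mset (shuffle_ms xs ys) (\<lambda>s. shuffle_ms s zs) = bind_mset (shuffle_ms ys zs) (shuffle_ms xs)"
proof (induction "length xs + length ys + length zs" arbitrary: xs ys zs rule: less_induct)
  case less
  show ?case
  proof (cases "xs = [] \<or> ys = [] \<or> zs = []")
    case False
    then obtain x xs' y ys' z zs' where "xs = x # xs'" "ys = y # ys'" "zs = z # zs'"
      by (meson list.exhaust)
    with less show ?thesis
      by (simp add: bind_shuffle_ms_Cons_Cons_shuffle_ms bind_shuffle_ms_shuffle_ms_Cons_Cons)
  qed auto
qed

definition deconcat :: "'a list \<Rightarrow> ('a list \<times> 'a list) multiset" where
  "deconcat w = mset (map (\<lambda>i. (take i w, drop i w)) [0..<Suc (length w)])"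

lemma deconcat_Nil [simp]: "deconcat [] = {#([], [])#}"
  by (simp add: deconcat_def)

lemma deconcat_Cons [simp]:
  "deconcat (a # w) = add_mset ([], a # w) (image_mset (apfst ((#) a)) (deconcat w))"
proof -
  have "[0..<Suc (Suc (length w))] = 0 # map Suc [0..<Suc (length w)]"
    unfolding map_Suc_upt by (rule upt_conv_Cons) simp
  then show ?thesis
    unfolding deconcat_def
    by (simp del: upt_Suc add: comp_def mset_map image_mset.compositionality)
qed

lemma deconcat_map:
  "deconcat (map f w) = image_mset (map_prod (map f) (map f)) (deconcat w)"
  by (induction w) (auto simp: image_mset.compositionality comp_def apfst_def map_prod_def split_def)

lemma append_of_mem_deconcat: "P \<in># deconcat w \<Longrightarrow> fst P @ snd P = w"
  by (induction w arbitrary: P) auto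

lemma filter_deconcat_fst_Nil: "filter_mset (\<lambda>P. fst P = []) (deconcat w) = {#([], w)#}"
  by (induction w) (auto simp: filter_mset_image_mset apfst_def map_prod_def split_def)

lemma filter_deconcat_snd_Nil: "filter_mset (\<lambda>P. snd P = []) (deconcat w) = {#(w, [])#}"
  by (induction w) (auto simp: filter_mset_image_mset comp_def apfst_def map_prod_def split_def)

definition rassoc :: "('a \<times> 'b) \<times> 'c \<Rightarrow> 'a \<times> ('b \<times> 'c)" where
  "rassoc X = (fst (fst X), (snd (fst X), snd X))"

lemma deconcat_coassoc_left_Cons:
  "image_mset rassoc (bind_mset (deconcat (a # w)) (\<lambda>P. image_mset (\<lambda>Q. (Q, snd P)) (deconcat (fst P))))
   = add_mset ([], [], a # w) (image_mset (\<lambda>P. ([], a # fst P, snd P)) (deconcat w)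
     + image_mset (apfst ((#) a))
         (image_mset rassoc (bind_mset (deconcat w) (\<lambda>P. image_mset (\<lambda>Q. (Q, snd P)) (deconcat (fst P))))))"
  by (simp add: rassoc_def image_bind_mset image_mset.compositionality comp_def bind_mset_add_mset_fun)

lemma deconcat_coassoc_right_Cons:
  "bind_mset (deconcat (a # w)) (\<lambda>P. image_mset (Pair (fst P)) (deconcat (snd P)))
   = add_mset ([], [], a # w) (image_mset (\<lambda>P. ([], a # fst P, snd P)) (deconcat w)
     + image_mset (apfst ((#) a)) (bind_mset (deconcat w) (\<lambda>P. image_mset (Pair (fst P)) (deconcat (snd P)))))"
  by (simp add: image_bind_mset image_mset.compositionality comp_def apfst_def map_prod_def split_def)

lemma deconcat_coassoc:
  "image_mset rassoc (bind_mset (deconcat w) (\<lambda>P. image_mset (\<lambda>Q. (Q, snd P)) (deconcat (fst P))))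
   = bind_mset (deconcat w) (\<lambda>P. image_mset (Pair (fst P)) (deconcat (snd P)))"
  by (induction w) (simp_all only: deconcat_coassoc_left_Cons deconcat_coassoc_right_Cons,
      simp add: rassoc_def)

definition shuffle_pairs :: "'a list \<times> 'a list \<Rightarrow> 'a list \<times> 'a list \<Rightarrow> ('a list \<times> 'a list) multiset" where
  "shuffle_pairs P Q = product_mset (shuffle_ms (fst P) (fst Q)) (shuffle_ms (snd P) (snd Q))"

lemma shuffle_pairs_Nil_left: "shuffle_pairs ([], q) Q = image_mset (Pair (fst Q)) (shuffle_ms q (snd Q))"
  by (simp add: shuffle_pairs_def)

lemma shuffle_pairs_Nil_apfst:
  "shuffle_pairs ([], p) (apfst ((#) y) Q) = image_mset (apfst ((#) y)) (shuffle_pairs ([], p) Q)"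
  by (simp add: shuffle_pairs_def image_mset.compositionality comp_def apfst_def map_prod_def split_def)

lemma shuffle_pairs_apfst_Nil:
  "shuffle_pairs (apfst ((#) x) P) ([], q) = image_mset (apfst ((#) x)) (shuffle_pairs P ([], q))"
  by (simp add: shuffle_pairs_def image_mset.compositionality comp_def apfst_def map_prod_def split_def)

lemma shuffle_pairs_Cons_Cons:
  "shuffle_pairs (apfst ((#) x) P) (apfst ((#) y) Q)
     = image_mset (apfst ((#) x)) (shuffle_pairs P (apfst ((#) y) Q))
       + image_mset (apfst ((#) y)) (shuffle_pairs (apfst ((#) x) P) Q)"
  by (simp add: shuffle_pairs_def apfst_def map_prod_def split_def shuffle_ms.simps(3)
      product_mset_image_left)

lemma bind_deconcat_shuffle_pairs_Cons_Cons:
  "bind_mset (deconcat (x # xs)) (\<lambda>P. bind_mset (deconcat (y # ys)) (shuffle_pairs P))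
     = shuffle_pairs ([], x # xs) ([], y # ys)
       + image_mset (apfst ((#) x)) (bind_mset (deconcat xs) (\<lambda>P. bind_mset (deconcat (y # ys)) (shuffle_pairs P)))
       + image_mset (apfst ((#) y)) (bind_mset (deconcat (x # xs)) (\<lambda>P. bind_mset (deconcat ys) (shuffle_pairs P)))"
  by (simp add: shuffle_pairs_Cons_Cons shuffle_pairs_Nil_apfst shuffle_pairs_apfst_Nil
      bind_mset_add_fun image_bind_mset add_ac)

lemma bind_mset_image_Cons_deconcat:
  "bind_mset (image_mset ((#) a) M) deconcat
     = image_mset (\<lambda>s. ([], a # s)) M + image_mset (apfst ((#) a)) (bind_mset M deconcat)"
  by (induction M) auto

lemma bind_shuffle_ms_Cons_Cons_deconcat:
  "bind_mset (shuffle_ms (x # xs) (y # ys)) deconcat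
     = shuffle_pairs ([], x # xs) ([], y # ys)
       + image_mset (apfst ((#) x)) (bind_mset (shuffle_ms xs (y # ys)) deconcat)
       + image_mset (apfst ((#) y)) (bind_mset (shuffle_ms (x # xs) ys) deconcat)"
  unfolding shuffle_ms.simps(3)[of x xs] bind_mset_union bind_mset_image_Cons_deconcat
  by (simp add: shuffle_pairs_Nil_left shuffle_ms.simps(3) image_mset.compositionality comp_def add_ac)

lemma deconcat_shuffle_ms:
  "bind_mset (shuffle_ms v w) deconcat
     = bind_mset (deconcat v) (\<lambda>P. bind_mset (deconcat w) (shuffle_pairs P))"
proof (induction v w rule: shuffle_ms.induct)
  case (3 x xs y ys)
  then show ?case
    by (simp only: bind_shuffle_ms_Cons_Cons_deconcat bind_deconcat_shuffle_pairs_Cons_Cons)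
qed (simp_all add: shuffle_pairs_def)

lemma shuffle_ms_word_up_assoc:
  "bind_mset (shuffle_ms v (word_up w m)) (\<lambda>t. shuffle_ms u (word_up t l))
     = bind_mset (shuffle_ms u (word_up v l)) (\<lambda>s. shuffle_ms s (word_up w (l + m)))"
proof -
  have "image_mset (\<lambda>t. word_up t l) (shuffle_ms v (word_up w m))
      = shuffle_ms (word_up v l) (word_up w (l + m))"
    using shuffle_ms_map[of "\<lambda>a. a + l" v "word_up w m", symmetric]
    by (simp add: word_up_def comp_def add_ac)
  then have "bind_mset (shuffle_ms v (word_up w m)) (\<lambda>t. shuffle_ms u (word_up t l))
      = bind_mset (shuffle_ms (word_up v l) (word_up w (l + m))) (shuffle_ms u)"
    by (metis bind_mset_image)
  then show ?thesis by (simp add: shuffle_ms_assoc)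
qed

lemma deconcat_shuffle_ms_word_up:
  "bind_mset (shuffle_ms v (word_up w m)) deconcat
     = bind_mset (deconcat v) (\<lambda>P. bind_mset (deconcat w)
         (\<lambda>Q. shuffle_pairs P (map_prod (\<lambda>t. word_up t m) (\<lambda>t. word_up t m) Q)))"
  unfolding deconcat_shuffle_ms by (simp add: word_up_def deconcat_map)

definition vec_mset :: "'b multiset \<Rightarrow> ('b \<Rightarrow>\<^sub>0 'k::field)" where
  "vec_mset M = (\<Sum>b\<in>#M. basis_vec b)"

lemma vec_mset_empty [simp]: "vec_mset {#} = 0"
  by (simp add: vec_mset_def)

lemma vec_mset_add_mset [simp]: "vec_mset (add_mset a M) = basis_vec a + vec_mset M"
  by (simp add: vec_mset_def)

lemma vec_mset_union [simp]: "vec_mset (M + N) = vec_mset M + vec_mset N"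
  by (simp add: vec_mset_def)

lemma lookup_vec_mset: "Poly_Mapping.lookup (vec_mset M :: 'b \<Rightarrow>\<^sub>0 'k::field) b = of_nat (count M b)"
  by (induction M) (auto simp: lookup_add lookup_basis_vec)

lemma keys_vec_mset: "Poly_Mapping.keys (vec_mset M :: 'b \<Rightarrow>\<^sub>0 'k::field) \<subseteq> set_mset M"
proof
  fix b
  assume "b \<in> Poly_Mapping.keys (vec_mset M :: 'b \<Rightarrow>\<^sub>0 'k::field)"
  then have "(of_nat (count M b) :: 'k) \<noteq> 0"
    by (simp add: in_keys_iff lookup_vec_mset)
  then have "count M b \<noteq> 0"
    by (metis of_nat_0)
  then show "b \<in># M"
    by (simp add: count_eq_zero_iff[symmetric] del: count_eq_zero_iff)
qed

lemma lin_ext_vec_mset: "lin_ext F (vec_mset M) = (\<Sum>b\<in>#M. F b)"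
  unfolding vec_mset_def by (simp add: linear_map_sum_mset[OF linear_map_lin_ext])

lemma lin_fun_vec_mset: "lin_fun f (vec_mset M) = (\<Sum>b\<in>#M. f b)"
  by (induction M) (simp_all add: linear_functional_zero[OF linear_functional_lin_fun]
      linear_functional_lin_fun[unfolded linear_functional_def])

lemma sum_mset_vec_mset: "(\<Sum>x\<in>#M. vec_mset (G x)) = vec_mset (bind_mset M G)"
  by (induction M) auto

lemma tens_vec_mset: "tens (vec_mset M) (vec_mset N) = vec_mset (product_mset M N)"
proof -
  have "tens (vec_mset M) (vec_mset N) = (\<Sum>a\<in>#M. \<Sum>b\<in>#N. tens (basis_vec a) (basis_vec b))"
    unfolding vec_mset_def linear_map_sum_mset[OF linear_map_tens(1)]
    by (simp add: linear_map_sum_mset[OF linear_map_tens(2)])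
  also have "\<dots> = (\<Sum>a\<in>#M. vec_mset (image_mset (Pair a) N))"
    by (simp add: tens_basis_vec vec_mset_def image_mset.compositionality comp_def)
  finally show ?thesis
    unfolding sum_mset_vec_mset product_mset_def .
qed

lemma mult_vec_mset: "mult mb (vec_mset M) (vec_mset N) = (\<Sum>P\<in>#product_mset M N. mb (fst P) (snd P))"
  unfolding mult_def mult_lin_def tens_vec_mset lin_ext_vec_mset by (simp add: split_def)

lemma tens_map_vec_mset: "tens_map F G (vec_mset M) = (\<Sum>P\<in>#M. tens (F (fst P)) (G (snd P)))"
  by (simp add: tens_map_def lin_ext_vec_mset split_def)

section \<open>The bialgebra of word operators\<close>

definition bounded_word :: "nat \<Rightarrow> nat list \<Rightarrow> bool" where
  "bounded_word n w \<longleftrightarrow> (\<forall>x\<in>set w. 0 < x \<and> x \<le> n)"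

(* The basis vector [w,n]; Abs_wb is unspecified unless bounded_word n w. *)
definition wb :: "nat list \<Rightarrow> nat \<Rightarrow> wbasis" where
  "wb w n = Abs_wb (w, n)"

definition wb_pair :: "nat \<Rightarrow> nat list \<times> nat list \<Rightarrow> wbasis \<times> wbasis" where
  "wb_pair n = map_prod (\<lambda>p. wb p n) (\<lambda>q. wb q n)"

lemma bounded_word_Nil [simp]: "bounded_word n []"
  by (simp add: bounded_word_def)

lemma rep_wb_wb: "bounded_word n w \<Longrightarrow> rep_wb (wb w n) = (w, n)"
  unfolding wb_def by (rule Abs_wb_inverse) (simp add: bounded_word_def)

lemma wbasis_cases:
  obtains w n where "b = wb w n" "bounded_word n w"
proof -
  obtain w n where r: "rep_wb b = (w, n)" by fastforce
  then have "bounded_word n w" using rep_wb[of b] by (simp add: bounded_word_def)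
  moreover have "b = wb w n" using r unfolding wb_def by (metis rep_wb_inverse)
  ultimately show ?thesis using that by blast
qed

lemma bounded_word_shuffle_ms:
  assumes "bounded_word m v" "bounded_word n w" "s \<in># shuffle_ms v (word_up w m)"
  shows "bounded_word (m + n) s"
proof -
  have "set s = set v \<union> (\<lambda>a. a + m) ` set w"
    using set_shuffle_ms[OF assms(3)] by (simp add: word_up_def)
  with assms(1,2) show ?thesis unfolding bounded_word_def by force
qed

lemma bounded_word_deconcat:
  "bounded_word n w \<Longrightarrow> P \<in># deconcat w \<Longrightarrow> bounded_word n (fst P) \<and> bounded_word n (snd P)"
  by (auto simp: bounded_word_def dest!: append_of_mem_deconcat)

lemma W_deg_wb: "bounded_word n w \<Longrightarrow> W_deg (wb w n) = length w"
  by (simp add: W_deg_def rep_wb_wb)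

lemma W_unit_eq: "W_unit = basis_vec (wb [] 0)"
  by (simp add: W_unit_def basis_vec_def wb_def)

lemma W_mult_basis_wb:
  assumes "bounded_word m v" "bounded_word n w"
  shows "W_mult_basis (wb v m) (wb w n) = vec_mset (image_mset (\<lambda>s. wb s (m + n)) (shuffle_ms v (word_up w m)))"
  unfolding W_mult_basis_def rep_wb_wb[OF assms(1)] rep_wb_wb[OF assms(2)]
  by (simp add: vec_mset_def image_mset.compositionality comp_def basis_vec_def wb_def)

lemma W_coprod_basis_wb:
  assumes "bounded_word n w"
  shows "W_coprod_basis (wb w n) = vec_mset (image_mset (wb_pair n) (deconcat w))"
proof -
  have "deconcat w = image_mset (\<lambda>i. (take i w, drop i w)) (mset_set {0..length w})"
    unfolding deconcat_def mset_map mset_upt atLeastLessThanSuc_atLeastAtMost ..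
  then show ?thesis
    unfolding W_coprod_basis_def rep_wb_wb[OF assms]
    by (simp add: sum_unfold_sum_mset vec_mset_def image_mset.compositionality comp_def
        basis_vec_def wb_pair_def wb_def)
qed

lemma W_counit_basis_wb: "bounded_word n w \<Longrightarrow> W_counit_basis (wb w n) = (if w = [] then 1 else 0)"
  by (simp add: W_counit_basis_def rep_wb_wb)

lemma keys_W_mult_basis:
  assumes "c \<in> Poly_Mapping.keys (W_mult_basis a b :: _ \<Rightarrow>\<^sub>0 'k::field)"
  shows "W_deg c = W_deg a + W_deg b \<and> snd (rep_wb c) = snd (rep_wb a) + snd (rep_wb b)"
proof -
  obtain v m where a: "a = wb v m" "bounded_word m v" by (rule wbasis_cases)
  obtain w n where b: "b = wb w n" "bounded_word n w" by (rule wbasis_cases)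
  obtain s where s: "s \<in># shuffle_ms v (word_up w m)" "c = wb s (m + n)"
    using assms keys_vec_mset by (fastforce simp: a b W_mult_basis_wb)
  then show ?thesis
    using bounded_word_shuffle_ms[OF a(2) b(2) s(1)] length_shuffle_ms[OF s(1)]
    by (simp add: a b W_deg_wb rep_wb_wb word_up_def)
qed

lemma mult_W_vec_mset_left:
  assumes "\<And>s. s \<in># S \<Longrightarrow> bounded_word m s" "bounded_word n w"
  shows "mult W_mult_basis (vec_mset (image_mset (\<lambda>s. wb s m) S)) (basis_vec (wb w n))
       = (vec_mset (image_mset (\<lambda>s. wb s (m + n)) (bind_mset S (\<lambda>s. shuffle_ms s (word_up w m))))
          :: _ \<Rightarrow>\<^sub>0 'k::field)"
proof -
  have "mult W_mult_basis (vec_mset (image_mset (\<lambda>s. wb s m) S)) (vec_mset {#wb w n#})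
      = (\<Sum>s\<in>#S. (W_mult_basis (wb s m) (wb w n) :: _ \<Rightarrow>\<^sub>0 'k))"
    unfolding mult_vec_mset by (simp add: image_mset.compositionality comp_def)
  also have "\<dots> = (\<Sum>s\<in>#S. vec_mset (image_mset (\<lambda>s. wb s (m + n)) (shuffle_ms s (word_up w m))))"
    using assms by (intro arg_cong[where f = sum_mset] image_mset_cong) (simp add: W_mult_basis_wb)
  finally show ?thesis
    by (simp add: sum_mset_vec_mset image_bind_mset)
qed

lemma mult_W_vec_mset_right:
  assumes "bounded_word l u" "\<And>t. t \<in># T \<Longrightarrow> bounded_word n t"
  shows "mult W_mult_basis (basis_vec (wb u l)) (vec_mset (image_mset (\<lambda>t. wb t n) T))
       = (vec_mset (image_mset (\<lambda>s. wb s (l + n)) (bind_mset T (\<lambda>t. shuffle_ms u (word_up t l))))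
          :: _ \<Rightarrow>\<^sub>0 'k::field)"
proof -
  have "mult W_mult_basis (vec_mset {#wb u l#}) (vec_mset (image_mset (\<lambda>t. wb t n) T))
      = (\<Sum>t\<in>#T. (W_mult_basis (wb u l) (wb t n) :: _ \<Rightarrow>\<^sub>0 'k))"
    unfolding mult_vec_mset by (simp add: image_mset.compositionality comp_def)
  also have "\<dots> = (\<Sum>t\<in>#T. vec_mset (image_mset (\<lambda>s. wb s (l + n)) (shuffle_ms u (word_up t l))))"
    using assms by (intro arg_cong[where f = sum_mset] image_mset_cong) (simp add: W_mult_basis_wb)
  finally show ?thesis
    by (simp add: sum_mset_vec_mset image_bind_mset)
qed

lemma W_mult_basis_assoc:
  "mult W_mult_basis (W_mult_basis a b) (basis_vec c)
     = (mult W_mult_basis (basis_vec a) (W_mult_basis b c) :: _ \<Rightarrow>\<^sub>0 'k::field)"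
proof -
  obtain u l where a: "a = wb u l" "bounded_word l u" by (rule wbasis_cases)
  obtain v m where b: "b = wb v m" "bounded_word m v" by (rule wbasis_cases)
  obtain w n where c: "c = wb w n" "bounded_word n w" by (rule wbasis_cases)
  have "mult W_mult_basis (W_mult_basis a b) (basis_vec c) = (vec_mset (image_mset (\<lambda>s. wb s (l + m + n))
      (bind_mset (shuffle_ms u (word_up v l)) (\<lambda>s. shuffle_ms s (word_up w (l + m))))) :: _ \<Rightarrow>\<^sub>0 'k)"
    using a b c bounded_word_shuffle_ms by (simp add: W_mult_basis_wb mult_W_vec_mset_left)
  also have "\<dots> = mult W_mult_basis (basis_vec a) (W_mult_basis b c)"
    using a b c bounded_word_shuffle_ms
    by (simp add: W_mult_basis_wb mult_W_vec_mset_right shuffle_ms_word_up_assoc add_ac)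
  finally show ?thesis .
qed

lemma W_mult_basis_unit: "W_mult_basis (wb [] 0) b = basis_vec b" "W_mult_basis b (wb [] 0) = basis_vec b"
proof -
  obtain w n where b: "b = wb w n" "bounded_word n w" by (rule wbasis_cases)
  then show "W_mult_basis (wb [] 0) b = basis_vec b" "W_mult_basis b (wb [] 0) = basis_vec b"
    by (simp_all add: W_mult_basis_wb word_up_def)
qed

lemma tens_map_W_coprod_basis_left:
  assumes "bounded_word n w"
  shows "tens_map W_coprod_basis basis_vec (W_coprod_basis (wb w n))
    = (vec_mset (image_mset (map_prod (wb_pair n) (\<lambda>s. wb s n))
         (bind_mset (deconcat w) (\<lambda>P. image_mset (\<lambda>Q. (Q, snd P)) (deconcat (fst P))))) :: _ \<Rightarrow>\<^sub>0 'k::field)"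
proof -
  have "tens_map W_coprod_basis basis_vec (W_coprod_basis (wb w n))
      = (\<Sum>P\<in>#deconcat w. tens (vec_mset (image_mset (wb_pair n) (deconcat (fst P))))
                                (vec_mset {#wb (snd P) n#}) :: _ \<Rightarrow>\<^sub>0 'k)"
    unfolding W_coprod_basis_wb[OF assms] tens_map_vec_mset image_mset.compositionality
    using bounded_word_deconcat[OF assms]
    by (intro arg_cong[where f = sum_mset] image_mset_cong) (simp add: W_coprod_basis_wb wb_pair_def)
  then show ?thesis
    unfolding tens_vec_mset sum_mset_vec_mset
    by (simp add: image_bind_mset image_mset.compositionality comp_def)
qed

lemma tens_map_W_coprod_basis_right:
  assumes "bounded_word n w"
  shows "tens_map basis_vec W_coprod_basis (W_coprod_basis (wb w n))
    = (vec_mset (image_mset (map_prod (\<lambda>s. wb s n) (wb_pair n))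
         (bind_mset (deconcat w) (\<lambda>P. image_mset (Pair (fst P)) (deconcat (snd P))))) :: _ \<Rightarrow>\<^sub>0 'k::field)"
proof -
  have "tens_map basis_vec W_coprod_basis (W_coprod_basis (wb w n))
      = (\<Sum>P\<in>#deconcat w. tens (vec_mset {#wb (fst P) n#})
                                (vec_mset (image_mset (wb_pair n) (deconcat (snd P)))) :: _ \<Rightarrow>\<^sub>0 'k)"
    unfolding W_coprod_basis_wb[OF assms] tens_map_vec_mset image_mset.compositionality
    using bounded_word_deconcat[OF assms]
    by (intro arg_cong[where f = sum_mset] image_mset_cong) (simp add: W_coprod_basis_wb wb_pair_def)
  then show ?thesis
    unfolding tens_vec_mset sum_mset_vec_mset
    by (simp add: image_bind_mset image_mset.compositionality comp_def)
qed

lemma W_coprod_basis_coassoc: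
  "Poly_Mapping.lookup (tens_map W_coprod_basis basis_vec (W_coprod_basis d)) ((a, b), c)
   = Poly_Mapping.lookup (tens_map basis_vec W_coprod_basis (W_coprod_basis d :: _ \<Rightarrow>\<^sub>0 'k::field)) (a, (b, c))"
proof -
  obtain w n where d: "d = wb w n" "bounded_word n w" by (rule wbasis_cases)
  define L where "L = bind_mset (deconcat w) (\<lambda>P. image_mset (\<lambda>Q. (Q, snd P)) (deconcat (fst P)))"
  have "image_mset (map_prod (\<lambda>s. wb s n) (wb_pair n))
          (bind_mset (deconcat w) (\<lambda>P. image_mset (Pair (fst P)) (deconcat (snd P))))
      = image_mset rassoc (image_mset (map_prod (wb_pair n) (\<lambda>s. wb s n)) L)"
    unfolding deconcat_coassoc[symmetric] L_def
    by (simp add: image_mset.compositionality comp_def rassoc_def wb_pair_def)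
  moreover have "count (image_mset rassoc M) (a, (b, c)) = count M ((a, b), c)" for M
  proof -
    have "inj rassoc"
      by (rule injI) (simp add: rassoc_def prod_eq_iff)
    then show ?thesis
      using count_image_mset_inj[of rassoc M "((a, b), c)"] by (simp add: rassoc_def)
  qed
  ultimately show ?thesis
    unfolding d(1) tens_map_W_coprod_basis_left[OF d(2)] tens_map_W_coprod_basis_right[OF d(2)]
      lookup_vec_mset L_def[symmetric]
    by simp
qed

lemma W_coprod_basis_counit:
  "lin_ext (\<lambda>(a, b). vsmult (W_counit_basis a) (basis_vec b)) (W_coprod_basis d :: _ \<Rightarrow>\<^sub>0 'k::field)
     = basis_vec d"
  "lin_ext (\<lambda>(a, b). vsmult (W_counit_basis b) (basis_vec a)) (W_coprod_basis d :: _ \<Rightarrow>\<^sub>0 'k::field)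
     = basis_vec d"
proof -
  obtain w n where d: "d = wb w n" "bounded_word n w" by (rule wbasis_cases)
  have "lin_ext (\<lambda>(a, b). vsmult (W_counit_basis a) (basis_vec b)) (W_coprod_basis d :: _ \<Rightarrow>\<^sub>0 'k)
      = (\<Sum>P\<in>#deconcat w. if fst P = [] then basis_vec (wb (snd P) n) else 0)"
    unfolding d(1) W_coprod_basis_wb[OF d(2)] lin_ext_vec_mset image_mset.compositionality
    by (intro arg_cong[where f = sum_mset] image_mset_cong)
       (auto simp: wb_pair_def W_counit_basis_wb dest: bounded_word_deconcat[OF d(2)])
  then show "lin_ext (\<lambda>(a, b). vsmult (W_counit_basis a) (basis_vec b)) (W_coprod_basis d :: _ \<Rightarrow>\<^sub>0 'k)
      = basis_vec d"
    by (simp add: sum_mset_if_filter_mset filter_deconcat_fst_Nil d)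
  have "lin_ext (\<lambda>(a, b). vsmult (W_counit_basis b) (basis_vec a)) (W_coprod_basis d :: _ \<Rightarrow>\<^sub>0 'k)
      = (\<Sum>P\<in>#deconcat w. if snd P = [] then basis_vec (wb (fst P) n) else 0)"
    unfolding d(1) W_coprod_basis_wb[OF d(2)] lin_ext_vec_mset image_mset.compositionality
    by (intro arg_cong[where f = sum_mset] image_mset_cong)
       (auto simp: wb_pair_def W_counit_basis_wb dest: bounded_word_deconcat[OF d(2)])
  then show "lin_ext (\<lambda>(a, b). vsmult (W_counit_basis b) (basis_vec a)) (W_coprod_basis d :: _ \<Rightarrow>\<^sub>0 'k)
      = basis_vec d"
    by (simp add: sum_mset_if_filter_mset filter_deconcat_snd_Nil d)
qed

lemma W_counit_basis_mult:
  "lin_fun W_counit_basis (W_mult_basis a b :: _ \<Rightarrow>\<^sub>0 'k::field) = W_counit_basis a * W_counit_basis b"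
proof -
  obtain v m where a: "a = wb v m" "bounded_word m v" by (rule wbasis_cases)
  obtain w n where b: "b = wb w n" "bounded_word n w" by (rule wbasis_cases)
  have "lin_fun W_counit_basis (W_mult_basis a b :: _ \<Rightarrow>\<^sub>0 'k)
      = (\<Sum>s\<in>#shuffle_ms v (word_up w m). if s = [] then 1 else 0)"
    unfolding a(1) b(1) W_mult_basis_wb[OF a(2) b(2)] lin_fun_vec_mset image_mset.compositionality
    by (intro arg_cong[where f = sum_mset] image_mset_cong)
       (auto simp: W_counit_basis_wb dest: bounded_word_shuffle_ms[OF a(2) b(2)])
  also have "\<dots> = (if v = [] \<and> w = [] then 1 else 0)"
  proof (cases "v = [] \<and> w = []")
    case False
    then have "(\<Sum>s\<in>#shuffle_ms v (word_up w m). if s = [] then 1 else 0) = (\<Sum>s\<in>#shuffle_ms v (word_up w m). 0 :: 'k)"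
      by (intro arg_cong[where f = sum_mset] image_mset_cong) (auto dest!: length_shuffle_ms simp: word_up_def)
    with False show ?thesis by simp
  qed (simp add: word_up_def)
  finally show ?thesis
    by (simp add: a b W_counit_basis_wb)
qed

lemma tens_prod_basis_W_wb_pair:
  assumes "bounded_word m (fst P)" "bounded_word m (snd P)" "bounded_word n (fst Q)" "bounded_word n (snd Q)"
  shows "tens_prod_basis W_mult_basis (wb_pair m P) (wb_pair n Q)
     = (vec_mset (image_mset (wb_pair (m + n))
          (shuffle_pairs P (map_prod (\<lambda>t. word_up t m) (\<lambda>t. word_up t m) Q))) :: _ \<Rightarrow>\<^sub>0 'k::field)"
  using assms
  by (simp add: tens_prod_basis_def wb_pair_def W_mult_basis_wb tens_vec_mset product_mset_image
      shuffle_pairs_def)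

lemma W_coprod_basis_mult:
  "lin_ext W_coprod_basis (W_mult_basis a b)
     = (mult (tens_prod_basis W_mult_basis) (W_coprod_basis a) (W_coprod_basis b) :: _ \<Rightarrow>\<^sub>0 'k::field)"
proof -
  obtain v m where a: "a = wb v m" "bounded_word m v" by (rule wbasis_cases)
  obtain w n where b: "b = wb w n" "bounded_word n w" by (rule wbasis_cases)
  have "lin_ext W_coprod_basis (W_mult_basis a b)
      = (\<Sum>s\<in>#shuffle_ms v (word_up w m). (vec_mset (image_mset (wb_pair (m + n)) (deconcat s)) :: _ \<Rightarrow>\<^sub>0 'k))"
    unfolding a(1) b(1) W_mult_basis_wb[OF a(2) b(2)] lin_ext_vec_mset image_mset.compositionality
    by (intro arg_cong[where f = sum_mset] image_mset_cong)
       (simp add: W_coprod_basis_wb bounded_word_shuffle_ms[OF a(2) b(2)])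
  also have "\<dots> = vec_mset (image_mset (wb_pair (m + n)) (bind_mset (shuffle_ms v (word_up w m)) deconcat))"
    by (simp add: sum_mset_vec_mset image_bind_mset)
  also have "\<dots> = (\<Sum>P\<in>#deconcat v. \<Sum>Q\<in>#deconcat w.
                       tens_prod_basis W_mult_basis (wb_pair m P) (wb_pair n Q))"
    unfolding deconcat_shuffle_ms_word_up image_bind_mset sum_mset_vec_mset[symmetric]
  proof (intro arg_cong[where f = sum_mset] image_mset_cong)
    fix P Q
    assume "P \<in># deconcat v" "Q \<in># deconcat w"
    with bounded_word_deconcat[OF a(2)] bounded_word_deconcat[OF b(2)]
    show "vec_mset (image_mset (wb_pair (m + n))
            (shuffle_pairs P (map_prod (\<lambda>t. word_up t m) (\<lambda>t. word_up t m) Q)))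
        = tens_prod_basis W_mult_basis (wb_pair m P) (wb_pair n Q)"
      by (simp add: tens_prod_basis_W_wb_pair)
  qed
  also have "\<dots> = mult (tens_prod_basis W_mult_basis) (W_coprod_basis a) (W_coprod_basis b)"
    unfolding a(1) b(1) W_coprod_basis_wb[OF a(2)] W_coprod_basis_wb[OF b(2)] mult_vec_mset
      sum_mset_product_mset
    by (simp add: image_mset.compositionality comp_def)
  finally show ?thesis .
qed

lemma W_bialgebra:
  "bialgebra (W_mult_basis :: _ \<Rightarrow> _ \<Rightarrow> (_ \<Rightarrow>\<^sub>0 'k::field)) W_unit W_coprod_basis W_counit_basis"
  unfolding W_unit_eq
proof (rule bialgebra_from_basis)
  show "W_coprod_basis (wb [] 0) = (basis_vec (wb [] 0, wb [] 0) :: _ \<Rightarrow>\<^sub>0 'k)"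
    by (simp add: W_coprod_basis_wb wb_pair_def)
  show "W_counit_basis (wb [] 0) = (1 :: 'k)"
    by (simp add: W_counit_basis_wb)
qed (simp_all add: W_mult_basis_assoc W_mult_basis_unit W_coprod_basis_coassoc
      W_coprod_basis_counit W_coprod_basis_mult W_counit_basis_mult)

lemma W_graded_bialgebra:
  "graded_bialgebra W_deg (W_mult_basis :: _ \<Rightarrow> _ \<Rightarrow> (_ \<Rightarrow>\<^sub>0 'k::field)) W_unit W_coprod_basis W_counit_basis"
  unfolding graded_bialgebra_def
proof (intro conjI allI ballI impI W_bialgebra)
  fix a b c
  assume "c \<in> Poly_Mapping.keys (W_mult_basis a b :: _ \<Rightarrow>\<^sub>0 'k)"
  then show "W_deg c = W_deg a + W_deg b"
    using keys_W_mult_basis by blast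
next
  fix c
  assume "c \<in> Poly_Mapping.keys (W_unit :: _ \<Rightarrow>\<^sub>0 'k)"
  then show "W_deg c = 0"
    by (simp add: W_unit_eq basis_vec_def W_deg_wb)
next
  fix a :: wbasis and x
  assume x: "x \<in> Poly_Mapping.keys (W_coprod_basis a :: _ \<Rightarrow>\<^sub>0 'k)"
  obtain w n where a: "a = wb w n" "bounded_word n w" by (rule wbasis_cases)
  obtain P where P: "P \<in># deconcat w" "x = wb_pair n P"
    using x keys_vec_mset by (fastforce simp: a W_coprod_basis_wb)
  then show "case x of (p, q) \<Rightarrow> W_deg p + W_deg q = W_deg a"
    using bounded_word_deconcat[OF a(2) P(1)] arg_cong[OF append_of_mem_deconcat[OF P(1)], of length]
    by (cases P) (simp add: a wb_pair_def W_deg_wb)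
next
  fix a
  assume "(W_counit_basis a :: 'k) \<noteq> 0"
  then show "W_deg a = 0"
    by (simp add: W_counit_basis_def W_deg_def split: if_splits)
qed

lemma W_not_hopf_algebra:
  "\<not> hopf_algebra (W_mult_basis :: _ \<Rightarrow> _ \<Rightarrow> (_ \<Rightarrow>\<^sub>0 'k::field)) W_unit W_coprod_basis W_counit_basis"
  unfolding W_unit_eq
proof (rule not_hopf_algebra_if_grouplike_of_higher_weight[where wt = "\<lambda>b. snd (rep_wb b)"])
  show "W_coprod_basis (wb [] 1) = (basis_vec (wb [] 1, wb [] 1) :: _ \<Rightarrow>\<^sub>0 'k)"
    by (simp add: W_coprod_basis_wb wb_pair_def)
  show "W_counit_basis (wb [] 1) = (1 :: 'k)"
    by (simp add: W_counit_basis_wb)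
  show "snd (rep_wb (wb [] 0)) < snd (rep_wb (wb [] 1))"
    by (simp add: rep_wb_wb)
qed (use keys_W_mult_basis in blast)

theorem theorem3p5:
  shows "graded_bialgebra W_deg (W_mult_basis :: wbasis \<Rightarrow> wbasis \<Rightarrow> (wbasis \<Rightarrow>\<^sub>0 'k::field))
            W_unit W_coprod_basis W_counit_basis
       \<and> \<not> hopf_algebra (W_mult_basis :: wbasis \<Rightarrow> wbasis \<Rightarrow> (wbasis \<Rightarrow>\<^sub>0 'k::field))
            W_unit W_coprod_basis W_counit_basis"
  using W_graded_bialgebra W_not_hopf_algebra by blast

end
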